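(* Let $n,k,d$ be integers with $1\le k\le d<n$, let $\alpha>0$, and for each integer $M\ge 0$ put $n_M=n+M$, $k_M=k+M$, $d_M=d+M$. Let $s\in(0,1]$ be fixed and put $i=i_M=1+s(k_M-1)$. Then $$\lim_{M\to\infty}\frac{P^{1}_{n_M,k_M,d_M}\!\left(\alpha,\frac{(d_M-k_M+i)\alpha}{d_M-k_M+1}\right)}{C_{k_M,d_M}\!\left(\alpha,\frac{(d_M-k_M+i)\alpha}{d_M-k_M+1}\right)}=1.$$
   Context: For integers $1\le k\le d$ and $\alpha,\gamma>0$, $C_{k,d}(\alpha,\gamma)=\sum_{j=0}^{k-1}\min\{\alpha,\frac{d-j}{d}\gamma\}$ (the functional-repair capacity). For integers $1\le k\le d<n$ and $\alpha>0$, the function $P^{1}_{n,k,d}$ is defined at the points $\gamma=\frac{(d-k+x)\alpha}{d-k+1}$, $x\in[1,k]$, as follows: for integer $x=i\in\{1,\dots,k\}$, $P^{1}_{n,k,d}\left(\alpha,\frac{(d-k+i)\alpha}{d-k+1}\right)=\frac{n i\alpha}{n-k+i}$, and for non-integer $x\in[1,k]$ the value is obtained by linear interpolation (in $\gamma$) between the values at the two neighbouring integers, i.e. $x\mapsto P^1_{n,k,d}\left(\alpha,\frac{(d-k+x)\alpha}{d-k+1}\right)$ is the piecewise linear curve connecting these points. *)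

theory Defs
  imports Complex_Main
begin

definition Cap :: "nat \<Rightarrow> nat \<Rightarrow> real \<Rightarrow> real \<Rightarrow> real" where
  "Cap k d \<alpha> \<gamma> = (\<Sum>j<k. min \<alpha> ((real d - real j) / real d * \<gamma>))"

definition P1_node :: "nat \<Rightarrow> nat \<Rightarrow> real \<Rightarrow> real \<Rightarrow> real" where
  "P1_node n k \<alpha> x = real n * x * \<alpha> / (real n - real k + x)"

text \<open>P^1_{n,k,d}(alpha,gamma), defined for gamma = (d-k+x) alpha/(d-k+1) with x in [1,k]:
  recover x from gamma, and interpolate linearly between the neighbouring integers
  (gamma is affine in x, so linear interpolation in gamma equals linear interpolation in x).\<close>
definition P1 :: "nat \<Rightarrow> nat \<Rightarrow> nat \<Rightarrow> real \<Rightarrow> real \<Rightarrow> real" where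
  "P1 n k d \<alpha> \<gamma> =
    (let x = \<gamma> * (real d - real k + 1) / \<alpha> - (real d - real k) in
     if 1 \<le> x \<and> x \<le> real k then
       (if x = real k then P1_node n k \<alpha> (real k)
        else let i = of_int \<lfloor>x\<rfloor> in
          P1_node n k \<alpha> i + (x - i) * (P1_node n k \<alpha> (i + 1) - P1_node n k \<alpha> i))
     else undefined)"

end

theory Submission imports Defs "HOL-Real_Asymp.Real_Asymp" begin

text \<open>With \<open>i = 1 + s(K - 1)\<close>, the value of \<open>P\<^sup>1\<close> lies between the node value at \<open>i - 1\<close> and its
  supremum \<open>N\<alpha>\<close>, and both are asymptotically \<open>K\<alpha>\<close>. On the other side, \<open>\<gamma>/\<alpha>\<close> stays bounded
  away from \<open>1\<close>, namely \<open>\<gamma>/\<alpha> \<ge> s (D + K)/(D + 1)\<close> with \<open>D = d - k\<close> fixed; hence all but a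
  bounded number \<open>L\<close> of the terms of the capacity sum are saturated at \<open>\<alpha>\<close>, so the capacity
  is squeezed between \<open>(K - L)\<alpha>\<close> and \<open>K\<alpha>\<close>.\<close>

lemma P1_node_mono:
  assumes "K < N" "\<alpha> > 0" "0 \<le> a" "a \<le> b"
  shows "P1_node N K \<alpha> a \<le> P1_node N K \<alpha> b"
proof -
  have c: "real N - real K > 0" using assms by simp
  have "a * (real N - real K) \<le> b * (real N - real K)"
    using assms c by (intro mult_right_mono) auto
  hence "a / (real N - real K + a) \<le> b / (real N - real K + b)"
    using c assms by (simp add: divide_simps algebra_simps)
  hence "real N * \<alpha> * (a / (real N - real K + a)) \<le> real N * \<alpha> * (b / (real N - real K + b))"
    using assms by (intro mult_left_mono) auto
  thus ?thesis unfolding P1_node_def by (simp add: field_simps)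
qed

lemma P1_node_nonneg:
  assumes "K < N" "\<alpha> > 0" "0 \<le> a"
  shows "0 \<le> P1_node N K \<alpha> a"
  unfolding P1_node_def using assms by (intro divide_nonneg_pos mult_nonneg_nonneg) auto

lemma P1_node_le:
  assumes "K < N" "\<alpha> > 0" "0 \<le> a"
  shows "P1_node N K \<alpha> a \<le> real N * \<alpha>"
proof -
  have "a / (real N - real K + a) \<le> 1" using assms by simp
  hence "real N * \<alpha> * (a / (real N - real K + a)) \<le> real N * \<alpha> * 1"
    using assms by (intro mult_left_mono) auto
  thus ?thesis unfolding P1_node_def by (simp add: field_simps)
qed

lemma P1_bounds:
  assumes "K < N" "K \<le> d" "\<alpha> > 0" "1 \<le> x" "x \<le> real K"
  defines "\<gamma> \<equiv> (real d - real K + x) * \<alpha> / (real d - real K + 1)"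
  shows "P1_node N K \<alpha> (x - 1) \<le> P1 N K d \<alpha> \<gamma>" and "P1 N K d \<alpha> \<gamma> \<le> real N * \<alpha>"
proof -
  have "real d - real K + 1 \<noteq> 0" using assms by simp
  hence x_of_\<gamma>: "\<gamma> * (real d - real K + 1) / \<alpha> - (real d - real K) = x"
    using \<open>\<alpha> > 0\<close> unfolding \<gamma>_def by simp
  have "P1_node N K \<alpha> (x - 1) \<le> P1 N K d \<alpha> \<gamma> \<and> P1 N K d \<alpha> \<gamma> \<le> real N * \<alpha>"
  proof (cases "x = real K")
    case True
    hence "P1 N K d \<alpha> \<gamma> = P1_node N K \<alpha> (real K)"
      unfolding P1_def Let_def x_of_\<gamma> using assms by simp
    thus ?thesis using assms True P1_node_mono[of K N \<alpha> "x - 1" "real K"] P1_node_le[of K N \<alpha> "real K"]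
      by auto
  next
    case False
    define i where "i = real_of_int \<lfloor>x\<rfloor>"
    have i: "1 \<le> i" "i \<le> x" "x < i + 1"
      using assms(4) unfolding i_def by (simp_all add: le_floor_iff)
    have P1_eq: "P1 N K d \<alpha> \<gamma> = P1_node N K \<alpha> i + (x - i) * (P1_node N K \<alpha> (i + 1) - P1_node N K \<alpha> i)"
      unfolding P1_def Let_def x_of_\<gamma> i_def using assms False by simp
    have step: "P1_node N K \<alpha> i \<le> P1_node N K \<alpha> (i + 1)"
      using P1_node_mono assms i by simp
    have "(x - i) * (P1_node N K \<alpha> (i + 1) - P1_node N K \<alpha> i) \<le> P1_node N K \<alpha> (i + 1) - P1_node N K \<alpha> i"
      using step i by (intro mult_left_le_one_le) auto
    moreover have "0 \<le> (x - i) * (P1_node N K \<alpha> (i + 1) - P1_node N K \<alpha> i)"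
      using step i by simp
    moreover have "P1_node N K \<alpha> (x - 1) \<le> P1_node N K \<alpha> i"
      using P1_node_mono assms i by simp
    moreover have "P1_node N K \<alpha> (i + 1) \<le> real N * \<alpha>"
      using P1_node_le assms i by simp
    ultimately show ?thesis unfolding P1_eq by linarith
  qed
  thus "P1_node N K \<alpha> (x - 1) \<le> P1 N K d \<alpha> \<gamma>" "P1 N K d \<alpha> \<gamma> \<le> real N * \<alpha>" by simp_all
qed

lemma Cap_le: "Cap k d \<alpha> \<gamma> \<le> real k * \<alpha>"
proof -
  have "Cap k d \<alpha> \<gamma> \<le> (\<Sum>j<k. \<alpha>)" unfolding Cap_def by (intro sum_mono) simp
  thus ?thesis by simp
qed

lemma Cap_ge_saturated:
  assumes "\<alpha> \<ge> 0" "\<gamma> \<ge> 0" "k \<le> d" "m \<le> k"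
    and saturated: "\<And>j. j < m \<Longrightarrow> \<alpha> \<le> (real d - real j) / real d * \<gamma>"
  shows "real m * \<alpha> \<le> Cap k d \<alpha> \<gamma>"
proof -
  have "real m * \<alpha> = (\<Sum>j<m. min \<alpha> ((real d - real j) / real d * \<gamma>))"
    using saturated by simp
  also have "\<dots> \<le> Cap k d \<alpha> \<gamma>" unfolding Cap_def
    using assms by (intro sum_mono2) auto
  finally show ?thesis .
qed

lemma Cap_term_saturated:
  assumes "0 < s" "s \<le> 1" "\<alpha> > 0" "K \<le> d" "0 < d"
    and L: "real d - real K + 1 \<le> real L * s"
    and x: "s * real K \<le> x" and j: "j + L \<le> K"
  shows "\<alpha> \<le> (real d - real j) / real d * ((real d - real K + x) * \<alpha> / (real d - real K + 1))"
proof -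
  define D where "D = real d - real K"
  have D: "0 \<le> D" using assms unfolding D_def by simp
  have "s * D \<le> D" using D assms by (simp add: mult_left_le_one_le)
  hence "s * real d \<le> D + x" using x unfolding D_def by (simp add: algebra_simps)
  moreover have "real L \<le> real d - real j" using j D unfolding D_def by linarith
  ultimately have "real L * (s * real d) \<le> (real d - real j) * (D + x)"
    using assms by (intro mult_mono) auto
  moreover have "(D + 1) * real d \<le> real L * s * real d"
    using L \<open>0 < d\<close> unfolding D_def by (intro mult_right_mono) auto
  ultimately have "(D + 1) * real d \<le> (real d - real j) * (D + x)" by simp
  hence "1 \<le> (real d - real j) * (D + x) / ((D + 1) * real d)"
    using D \<open>0 < d\<close> by simp
  hence "\<alpha> * 1 \<le> \<alpha> * ((real d - real j) * (D + x) / ((D + 1) * real d))"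
    using \<open>\<alpha> > 0\<close> by (intro mult_left_mono) auto
  thus ?thesis using D \<open>0 < d\<close> unfolding D_def by (simp add: field_simps)
qed

lemma P1_div_Cap_bounds:
  assumes "K < N" "K \<le> d" "\<alpha> > 0" "0 < s" "s \<le> 1" "L < K"
    and L: "real d - real K + 1 \<le> real L * s"
  defines "\<gamma> \<equiv> (real d - real K + (1 + s * (real K - 1))) * \<alpha> / (real d - real K + 1)"
  shows "P1_node N K \<alpha> (s * (real K - 1)) / (real K * \<alpha>) \<le> P1 N K d \<alpha> \<gamma> / Cap K d \<alpha> \<gamma>"
    and "P1 N K d \<alpha> \<gamma> / Cap K d \<alpha> \<gamma> \<le> real N / (real K - real L)"
proof -
  define x where "x = 1 + s * (real K - 1)"
  have "s * (real K - 1) \<le> real K - 1" using assms by (simp add: mult_left_le_one_le)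
  hence x: "1 \<le> x" "x \<le> real K" "s * real K \<le> x"
    using assms unfolding x_def by (auto simp: algebra_simps)
  have P1: "P1_node N K \<alpha> (s * (real K - 1)) \<le> P1 N K d \<alpha> \<gamma>" "P1 N K d \<alpha> \<gamma> \<le> real N * \<alpha>"
    using P1_bounds[OF \<open>K < N\<close> \<open>K \<le> d\<close> \<open>\<alpha> > 0\<close> x(1,2)] unfolding \<gamma>_def x_def by simp_all
  have "\<gamma> \<ge> 0" using assms x unfolding \<gamma>_def x_def by simp
  have "real (K - L) * \<alpha> \<le> Cap K d \<alpha> \<gamma>"
    using assms x \<open>\<gamma> \<ge> 0\<close> Cap_term_saturated[of s \<alpha> K d L x] unfolding \<gamma>_def x_def
    by (intro Cap_ge_saturated) auto
  hence Cap_lower: "(real K - real L) * \<alpha> \<le> Cap K d \<alpha> \<gamma>" using assms by (simp add: of_nat_diff)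
  have KL: "(real K - real L) * \<alpha> > 0" using assms by simp
  have node_nonneg: "0 \<le> P1_node N K \<alpha> (s * (real K - 1))"
    using assms x by (intro P1_node_nonneg) (auto simp: x_def)
  show "P1_node N K \<alpha> (s * (real K - 1)) / (real K * \<alpha>) \<le> P1 N K d \<alpha> \<gamma> / Cap K d \<alpha> \<gamma>"
    using P1(1) node_nonneg Cap_lower KL Cap_le[of K d \<alpha> \<gamma>] by (intro frac_le) auto
  have "P1 N K d \<alpha> \<gamma> / Cap K d \<alpha> \<gamma> \<le> real N * \<alpha> / ((real K - real L) * \<alpha>)"
    using P1 node_nonneg Cap_lower KL by (intro frac_le) auto
  thus "P1 N K d \<alpha> \<gamma> / Cap K d \<alpha> \<gamma> \<le> real N / (real K - real L)"
    using assms by simp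
qed

lemma P1_node_ratio_tendsto_1:
  assumes "k < n" "0 < s" "\<alpha> > 0"
  shows "(\<lambda>M. P1_node (n + M) (k + M) \<alpha> (s * (real (k + M) - 1)) / (real (k + M) * \<alpha>)) \<longlonglongrightarrow> 1"
  unfolding P1_node_def using assms by (real_asymp simp: field_simps)

lemma shifted_ratio_tendsto_1: "(\<lambda>M. real (n + M) / (real (k + M) - real L)) \<longlonglongrightarrow> 1"
  by real_asymp

theorem theorem5p1:
  fixes n k d :: nat and \<alpha> s :: real
  assumes "1 \<le> k" and "k \<le> d" and "d < n" and "\<alpha> > 0" and "0 < s" and "s \<le> 1"
  shows "(\<lambda>M. let i = 1 + s * (real (k + M) - 1);
                  \<gamma> = (real (d + M) - real (k + M) + i) * \<alpha> / (real (d + M) - real (k + M) + 1)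
              in P1 (n + M) (k + M) (d + M) \<alpha> \<gamma> / Cap (k + M) (d + M) \<alpha> \<gamma>)
         \<longlonglongrightarrow> 1"
proof -
  define L where "L = nat \<lceil>(real d - real k + 1) / s\<rceil>"
  have L: "real (d + M) - real (k + M) + 1 \<le> real L * s" for M
  proof -
    have "(real d - real k + 1) / s \<le> real L" unfolding L_def by linarith
    thus ?thesis using \<open>0 < s\<close> by (simp add: field_simps)
  qed
  note bounds = P1_div_Cap_bounds[of "k + M" "n + M" "d + M" \<alpha> s L for M]
  show ?thesis unfolding Let_def
    using assms L bounds
    by (intro tendsto_sandwich[OF _ _ P1_node_ratio_tendsto_1[of k n s \<alpha>] shifted_ratio_tendsto_1[of n k L]]
        eventually_sequentiallyI[of L]) auto
qed

end
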